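(* The deterministic greedy algorithm, which assigns each arriving item $i$ to a bidder $j$ maximizing the marginal value $f_j(S_j\cup\{i\})-f_j(S_j)$ (where $S_j$ is the set of items assigned to bidder $j$ so far) if this maximum marginal value is non-negative and discards $i$ otherwise, achieves a competitive ratio of approximately $0.27493$ (namely $\frac{1}{\sqrt5}\big(e^{-ax^*}-e^{-bx^*}\big)$ with $a=\frac{3-\sqrt5}{2}$, $b=\frac{3+\sqrt5}{2}$, $x^*=\frac{\ln(b/a)}{\sqrt5}$) for online Submodular Welfare in the random order setting with general (not necessarily monotone) non-negative submodular utilities; i.e., for every instance, the expected value (over the uniformly random arrival order) of the greedy allocation is at least this constant times the optimal offline value.
   Context: A set function $f:2^{\mathcal N}\to\mathbb R_{\ge 0}$ is submodular if $f(A\cup B)+f(A\cap B)\le f(A)+f(B)$ for all $A,B\subseteq\mathcal N$. Online Submodular Welfare: there are $n$ bidders, bidder $j$ having a non-negative submodular (not necessarily monotone) utility $f_j$ over a set $\mathcal N$ of $m$ items that arrive one by one. When an item arrives, the algorithm must immediately and irrevocably assign it to one bidder or discard it; the goal is to maximize $\sum_j f_j(S_j)$ where the sets $S_j$ of items assigned to the bidders are pairwise disjoint. The optimal offline value is $\max\{\sum_j f_j(O_j): O_1,\dots,O_n\subseteq\mathcal N\text{ pairwise disjoint}\}$. In the random order setting the items arrive in a uniformly random order. *)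

theory Defs
  imports "HOL-Analysis.Analysis" "HOL-Combinatorics.Multiset_Permutations"
begin

definition submodular_on :: "'a set \<Rightarrow> ('a set \<Rightarrow> real) \<Rightarrow> bool" where
  "submodular_on N g \<longleftrightarrow>
     (\<forall>A B. A \<subseteq> N \<longrightarrow> B \<subseteq> N \<longrightarrow> g (A \<union> B) + g (A \<inter> B) \<le> g A + g B)"

definition marginal :: "(nat \<Rightarrow> 'a set \<Rightarrow> real) \<Rightarrow> (nat \<Rightarrow> 'a set) \<Rightarrow> nat \<Rightarrow> 'a \<Rightarrow> real" where
  "marginal f S j i = f j (S j \<union> {i}) - f j (S j)"

text \<open>A tie-breaking rule for the greedy algorithm (bidders are 0..<n).  It receives the
  list of items that arrived before, the current allocation and the arriving item, and
  returns Some j (assign to j) or None (discard).\<close>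
definition greedy_rule ::
  "nat \<Rightarrow> (nat \<Rightarrow> 'a set \<Rightarrow> real) \<Rightarrow> ('a list \<Rightarrow> (nat \<Rightarrow> 'a set) \<Rightarrow> 'a \<Rightarrow> nat option) \<Rightarrow> bool" where
  "greedy_rule n f ch \<longleftrightarrow>
     (\<forall>pre S i.
        (ch pre S i = None \<longleftrightarrow> (\<forall>j<n. marginal f S j i < 0)) \<and>
        (\<forall>j. ch pre S i = Some j \<longrightarrow>
              j < n \<and> 0 \<le> marginal f S j i \<and> (\<forall>k<n. marginal f S k i \<le> marginal f S j i)))"

fun greedy_aux ::
  "('a list \<Rightarrow> (nat \<Rightarrow> 'a set) \<Rightarrow> 'a \<Rightarrow> nat option) \<Rightarrow> 'a list \<Rightarrow> (nat \<Rightarrow> 'a set) \<Rightarrow> 'a list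
     \<Rightarrow> (nat \<Rightarrow> 'a set)" where
  "greedy_aux ch pre S [] = S"
| "greedy_aux ch pre S (i # xs) =
     greedy_aux ch (pre @ [i])
       (case ch pre S i of None \<Rightarrow> S | Some j \<Rightarrow> S(j := S j \<union> {i})) xs"

definition greedy_alloc ::
  "('a list \<Rightarrow> (nat \<Rightarrow> 'a set) \<Rightarrow> 'a \<Rightarrow> nat option) \<Rightarrow> 'a list \<Rightarrow> (nat \<Rightarrow> 'a set)" where
  "greedy_alloc ch xs = greedy_aux ch [] (\<lambda>_. {}) xs"

definition welfare :: "nat \<Rightarrow> (nat \<Rightarrow> 'a set \<Rightarrow> real) \<Rightarrow> (nat \<Rightarrow> 'a set) \<Rightarrow> real" where
  "welfare n f S = (\<Sum>j<n. f j (S j))"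

definition expected_greedy ::
  "'a set \<Rightarrow> nat \<Rightarrow> (nat \<Rightarrow> 'a set \<Rightarrow> real) \<Rightarrow> ('a list \<Rightarrow> (nat \<Rightarrow> 'a set) \<Rightarrow> 'a \<Rightarrow> nat option) \<Rightarrow> real" where
  "expected_greedy N n f ch =
     (\<Sum>xs\<in>permutations_of_set N. welfare n f (greedy_alloc ch xs))
       / real (card (permutations_of_set N))"

definition greedy_ratio :: real where
  "greedy_ratio =
     (let a = (3 - sqrt 5) / 2; b = (3 + sqrt 5) / 2; x = ln (b / a) / sqrt 5
      in (exp (- a * x) - exp (- b * x)) / sqrt 5)"

end

(* Let k items have arrived, in a uniformly random order, let W be the welfare of the greedy
   allocation and H the welfare of the hybrid allocation that gives every bidder j its greedy
   items together with the items of its optimal set that are still to come.  For the next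
   item, uniform among the m - k remaining ones, greedy maximality and submodularity give
   E[W'] - W >= (H - W) / (m - k) and E[H'] - H >= - (E[W'] - W) - H / (m - k).  Hence the
   averages w k = E W and v k = E (W + H) satisfy

     w (k+1) >= w k + (v k - 2 w k) / (m - k),     v (k+1) >= v k + (w k - v k) / (m - k),

   with w 0 >= 0, v 0 = w 0 + OPT and w non-decreasing.  Solving these linear recurrences
   up to a time m - l gives sqrt 5 * w m >= (P_a - P_b) * OPT, where
   P_c = prod (1 - c / r) over l < r <= m behaves like (l / m)^c.  Stopping at l ~ t m,
   where t = e^-x* maximises t^a - t^b, and bounding the products by explicit powers yields
   the ratio; small m are checked numerically. *)

theory Submission
  imports Defs
begin

section \<open>Submodular functions\<close>

lemma submodular_on_marginal_antimono:
  assumes sm: "submodular_on N g" and "A \<subseteq> B" "B \<subseteq> N" "i \<in> N" "i \<notin> B"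
  shows "g (B \<union> {i}) - g B \<le> g (A \<union> {i}) - g A"
proof -
  have "A \<union> {i} \<subseteq> N" using assms by auto
  then have "g ((A \<union> {i}) \<union> B) + g ((A \<union> {i}) \<inter> B) \<le> g (A \<union> {i}) + g B"
    using sm assms unfolding submodular_on_def by blast
  moreover have "(A \<union> {i}) \<union> B = B \<union> {i}" "(A \<union> {i}) \<inter> B = A" using assms by auto
  ultimately show ?thesis by simp
qed

lemma submodular_on_diff_le_sum_marginals:
  assumes sm: "submodular_on N g" and "finite X" "X \<subseteq> N" "S \<subseteq> N" "X \<inter> S = {}"
  shows "g (S \<union> X) - g S \<le> (\<Sum>i\<in>X. g (S \<union> {i}) - g S)"
  using assms(2-5)
proof (induction X rule: finite_induct)
  case empty
  then show ?case by simp
next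
  case (insert x X)
  have "g (S \<union> X \<union> {x}) - g (S \<union> X) \<le> g (S \<union> {x}) - g S"
    using submodular_on_marginal_antimono[OF sm, of S "S \<union> X" x] insert by auto
  moreover have "S \<union> insert x X = S \<union> X \<union> {x}" by auto
  ultimately show ?case using insert by simp
qed

lemma submodular_on_neg_le_sum_marginals:
  assumes sm: "submodular_on N g" and nonneg: "\<And>A. A \<subseteq> N \<Longrightarrow> 0 \<le> g A"
    and "finite X" "X \<subseteq> N" "S \<subseteq> N" "X \<inter> S = {}"
  shows "- g S \<le> (\<Sum>i\<in>X. g (S \<union> {i}) - g S)"
proof -
  have "g (S \<union> X) - g S \<le> (\<Sum>i\<in>X. g (S \<union> {i}) - g S)"
    using submodular_on_diff_le_sum_marginals[OF sm] assms(3-6) .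
  moreover have "0 \<le> g (S \<union> X)" using nonneg assms(4,5) by simp
  ultimately show ?thesis by linarith
qed

lemma sum_disjoint_parts_le:
  fixes h :: "'a \<Rightarrow> real" and n :: nat
  assumes "finite R" "\<And>i. i \<in> R \<Longrightarrow> 0 \<le> h i"
    and "\<forall>j<n. \<forall>k<n. j \<noteq> k \<longrightarrow> P j \<inter> P k = {}"
  shows "(\<Sum>j<n. \<Sum>i\<in>P j \<inter> R. h i) \<le> (\<Sum>i\<in>R. h i)"
proof -
  have "(\<Sum>j<n. \<Sum>i\<in>P j \<inter> R. h i) = (\<Sum>i\<in>(\<Union>j<n. P j \<inter> R). h i)"
    by (rule sum.UNION_disjoint[symmetric]) (use assms in auto)
  also have "\<dots> \<le> (\<Sum>i\<in>R. h i)"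
    by (rule sum_mono2) (use assms in auto)
  finally show ?thesis .
qed

section \<open>Greedy runs and random prefixes\<close>

definition assign :: "(nat \<Rightarrow> 'a set) \<Rightarrow> nat option \<Rightarrow> 'a \<Rightarrow> nat \<Rightarrow> 'a set" where
  "assign S c i = (case c of None \<Rightarrow> S | Some j \<Rightarrow> S(j := S j \<union> {i}))"

lemma greedy_aux_snoc:
  "greedy_aux ch pre S (xs @ [i]) =
     (let S' = greedy_aux ch pre S xs in assign S' (ch (pre @ xs) S' i) i)"
  by (induction xs arbitrary: pre S) (simp_all add: assign_def Let_def)

lemma greedy_alloc_Nil: "greedy_alloc ch [] = (\<lambda>_. {})"
  by (simp add: greedy_alloc_def)

lemma greedy_alloc_snoc:
  "greedy_alloc ch (xs @ [i]) = assign (greedy_alloc ch xs) (ch xs (greedy_alloc ch xs) i) i"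
  by (simp add: greedy_alloc_def greedy_aux_snoc Let_def)

lemma greedy_alloc_subset: "greedy_alloc ch xs j \<subseteq> set xs"
  by (induction xs rule: rev_induct)
     (auto simp: greedy_alloc_snoc assign_def greedy_alloc_Nil split: option.splits)

definition prefixes :: "'a set \<Rightarrow> nat \<Rightarrow> 'a list set" where
  "prefixes N k = {p. length p = k \<and> distinct p \<and> set p \<subseteq> N}"

lemma prefixes_0: "prefixes N 0 = {[]}"
  by (auto simp: prefixes_def)

lemma finite_prefixes: "finite N \<Longrightarrow> finite (prefixes N k)"
  by (rule finite_subset[OF _ finite_lists_length_eq[of N k]]) (auto simp: prefixes_def)

lemma prefixes_Suc: "prefixes N (Suc k) = (\<lambda>(p, i). p @ [i]) ` (SIGMA p:prefixes N k. N - set p)"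
proof
  show "prefixes N (Suc k) \<subseteq> (\<lambda>(p, i). p @ [i]) ` (SIGMA p:prefixes N k. N - set p)"
  proof
    fix q assume "q \<in> prefixes N (Suc k)"
    then obtain y ys where q: "q = ys @ [y]" "length ys = k" "distinct q" "set q \<subseteq> N"
      by (auto simp: prefixes_def length_Suc_conv_rev)
    then have "(ys, y) \<in> (SIGMA p:prefixes N k. N - set p)" by (auto simp: prefixes_def)
    then show "q \<in> (\<lambda>(p, i). p @ [i]) ` (SIGMA p:prefixes N k. N - set p)"
      using q(1) by (auto intro!: image_eqI[where x = "(ys, y)"])
  qed
  show "(\<lambda>(p, i). p @ [i]) ` (SIGMA p:prefixes N k. N - set p) \<subseteq> prefixes N (Suc k)"
    by (auto simp: prefixes_def)
qed

lemma sum_prefixes_Suc: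
  assumes "finite N"
  shows "(\<Sum>q\<in>prefixes N (Suc k). \<phi> q) = (\<Sum>p\<in>prefixes N k. \<Sum>i\<in>N - set p. \<phi> (p @ [i]))"
proof -
  have "inj_on (\<lambda>(p, i). p @ [i]) X" for X :: "('a list \<times> 'a) set"
    by (rule inj_onI) auto
  then have "(\<Sum>q\<in>prefixes N (Suc k). \<phi> q)
      = (\<Sum>x\<in>(SIGMA p:prefixes N k. N - set p). \<phi> ((\<lambda>(p, i). p @ [i]) x))"
    unfolding prefixes_Suc by (subst sum.reindex) (simp_all add: comp_def)
  also have "\<dots> = (\<Sum>p\<in>prefixes N k. \<Sum>i\<in>N - set p. \<phi> (p @ [i]))"
    by (subst sum.Sigma) (use assms finite_prefixes in \<open>auto simp: case_prod_beta\<close>)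
  finally show ?thesis .
qed

lemma card_remaining: "finite N \<Longrightarrow> p \<in> prefixes N k \<Longrightarrow> card (N - set p) = card N - k"
  by (simp add: prefixes_def card_Diff_subset distinct_card)

lemma card_prefixes_Suc:
  assumes "finite N"
  shows "card (prefixes N (Suc k)) = card (prefixes N k) * (card N - k)"
proof -
  have "card (prefixes N (Suc k)) = (\<Sum>q\<in>prefixes N (Suc k). 1)" by simp
  also have "\<dots> = (\<Sum>p\<in>prefixes N k. \<Sum>i\<in>N - set p. 1)" by (rule sum_prefixes_Suc[OF assms])
  also have "\<dots> = (\<Sum>p\<in>prefixes N k. card N - k)"
    by (intro sum.cong) (auto simp: card_remaining[OF assms])
  finally show ?thesis by simp
qed

lemma prefixes_card_eq_permutations:
  assumes "finite N"
  shows "prefixes N (card N) = permutations_of_set N"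
proof
  show "prefixes N (card N) \<subseteq> permutations_of_set N"
  proof
    fix p assume p: "p \<in> prefixes N (card N)"
    then have "card (set p) = card N" "set p \<subseteq> N"
      by (auto simp: prefixes_def distinct_card)
    then have "set p = N" using assms card_subset_eq by blast
    then show "p \<in> permutations_of_set N" using p by (auto simp: prefixes_def permutations_of_set_def)
  qed
  show "permutations_of_set N \<subseteq> prefixes N (card N)"
    by (auto simp: prefixes_def permutations_of_set_def distinct_card)
qed

text \<open>The first k items of a uniformly random arrival order form a uniformly random
  element of prefixes N k, so prefix_avg N k is the expectation at time k.\<close>
definition prefix_avg :: "'a set \<Rightarrow> nat \<Rightarrow> ('a list \<Rightarrow> real) \<Rightarrow> real" where
  "prefix_avg N k \<phi> = (\<Sum>p\<in>prefixes N k. \<phi> p) / real (card (prefixes N k))"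

lemma prefix_avg_mono:
  "(\<And>p. p \<in> prefixes N k \<Longrightarrow> \<phi> p \<le> \<psi> p) \<Longrightarrow> prefix_avg N k \<phi> \<le> prefix_avg N k \<psi>"
  unfolding prefix_avg_def by (intro divide_right_mono sum_mono) auto

lemma prefix_avg_cong:
  "(\<And>p. p \<in> prefixes N k \<Longrightarrow> \<phi> p = \<psi> p) \<Longrightarrow> prefix_avg N k \<phi> = prefix_avg N k \<psi>"
  unfolding prefix_avg_def by (metis (mono_tags, lifting) sum.cong)

lemma prefix_avg_linear:
  "prefix_avg N k (\<lambda>p. a * \<phi> p + b * \<psi> p) = a * prefix_avg N k \<phi> + b * prefix_avg N k \<psi>"
  unfolding prefix_avg_def
  by (simp add: sum.distrib sum_distrib_left[symmetric] add_divide_distrib)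

lemma prefix_avg_Suc:
  assumes "finite N" "k < card N"
  shows "prefix_avg N (Suc k) \<phi> =
    prefix_avg N k (\<lambda>p. (\<Sum>i\<in>N - set p. \<phi> (p @ [i])) / real (card N - k))"
proof -
  have "prefix_avg N (Suc k) \<phi> = (\<Sum>p\<in>prefixes N k. \<Sum>i\<in>N - set p. \<phi> (p @ [i]))
      / (real (card (prefixes N k)) * real (card N - k))"
    unfolding prefix_avg_def sum_prefixes_Suc[OF assms(1)] card_prefixes_Suc[OF assms(1)] by simp
  also have "\<dots> = prefix_avg N k (\<lambda>p. (\<Sum>i\<in>N - set p. \<phi> (p @ [i])) / real (card N - k))"
    unfolding prefix_avg_def using assms(2) by (simp add: sum_divide_distrib[symmetric] field_simps)
  finally show ?thesis .
qed

lemma prefix_avg_Suc_increment: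
  assumes "finite N" "k < card N"
  shows "prefix_avg N (Suc k) \<phi> =
    prefix_avg N k (\<lambda>p. \<phi> p + (\<Sum>i\<in>N - set p. \<phi> (p @ [i]) - \<phi> p) / real (card N - k))"
  unfolding prefix_avg_Suc[OF assms]
proof (rule prefix_avg_cong)
  fix p assume "p \<in> prefixes N k"
  then have "card (N - set p) = card N - k"
    using card_remaining[OF assms(1)] by simp
  then show "(\<Sum>i\<in>N - set p. \<phi> (p @ [i])) / real (card N - k) =
      \<phi> p + (\<Sum>i\<in>N - set p. \<phi> (p @ [i]) - \<phi> p) / real (card N - k)"
    using assms(2) by (simp add: sum_subtractf of_nat_diff field_simps)
qed

section \<open>The recurrences for the greedy and hybrid welfare\<close>

locale greedy_instance =
  fixes N :: "'a set" and n :: nat and f :: "nat \<Rightarrow> 'a set \<Rightarrow> real"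
    and ch :: "'a list \<Rightarrow> (nat \<Rightarrow> 'a set) \<Rightarrow> 'a \<Rightarrow> nat option"
    and Opt :: "nat \<Rightarrow> 'a set"
  assumes finite_N: "finite N"
    and submodular: "\<forall>j<n. submodular_on N (f j)"
    and nonneg: "\<forall>j<n. \<forall>A\<subseteq>N. 0 \<le> f j A"
    and greedy: "greedy_rule n f ch"
    and Opt_subset: "\<forall>j<n. Opt j \<subseteq> N"
    and Opt_disjoint: "\<forall>j<n. \<forall>k<n. j \<noteq> k \<longrightarrow> Opt j \<inter> Opt k = {}"
begin

definition greedy_value :: "'a list \<Rightarrow> real" where
  "greedy_value p = welfare n f (greedy_alloc ch p)"

definition gain :: "'a list \<Rightarrow> 'a \<Rightarrow> real" where
  "gain p i = greedy_value (p @ [i]) - greedy_value p"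

definition hybrid_alloc :: "'a list \<Rightarrow> nat \<Rightarrow> 'a set" where
  "hybrid_alloc p j = greedy_alloc ch p j \<union> (Opt j \<inter> (N - set p))"

definition hybrid_value :: "'a list \<Rightarrow> real" where
  "hybrid_value p = welfare n f (hybrid_alloc p)"

lemma greedy_choice_None: "ch p S i = None \<longleftrightarrow> (\<forall>j<n. marginal f S j i < 0)"
  using greedy unfolding greedy_rule_def by blast

lemma greedy_choice_Some:
  "ch p S i = Some j \<Longrightarrow> j < n \<and> 0 \<le> marginal f S j i \<and> (\<forall>k<n. marginal f S k i \<le> marginal f S j i)"
  using greedy unfolding greedy_rule_def by blast

lemma gain_eq:
  "gain p i = (case ch p (greedy_alloc ch p) i of
                 None \<Rightarrow> 0
               | Some j \<Rightarrow> marginal f (greedy_alloc ch p) j i)"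
proof (cases "ch p (greedy_alloc ch p) i")
  case None
  then show ?thesis
    by (simp add: gain_def greedy_value_def welfare_def greedy_alloc_snoc assign_def)
next
  case (Some j)
  let ?S = "greedy_alloc ch p"
  have "j < n" using greedy_choice_Some[OF Some] by blast
  have "gain p i = (\<Sum>l<n. f l ((?S(j := ?S j \<union> {i})) l) - f l (?S l))"
    using Some by (simp add: gain_def greedy_value_def welfare_def greedy_alloc_snoc assign_def
        sum_subtractf)
  also have "\<dots> = (\<Sum>l<n. if l = j then f j (?S j \<union> {i}) - f j (?S j) else 0)"
    by (rule sum.cong) auto
  also have "\<dots> = marginal f ?S j i" using \<open>j < n\<close> by (simp add: marginal_def)
  finally show ?thesis using Some by simp
qed

lemma gain_nonneg: "0 \<le> gain p i"
proof (cases "ch p (greedy_alloc ch p) i")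
  case (Some j)
  then show ?thesis using greedy_choice_Some[OF Some] by (simp add: gain_eq)
qed (simp add: gain_eq)

lemma marginal_le_gain:
  assumes "j < n"
  shows "marginal f (greedy_alloc ch p) j i \<le> gain p i"
proof (cases "ch p (greedy_alloc ch p) i")
  case None
  then have "marginal f (greedy_alloc ch p) j i < 0" using greedy_choice_None assms by blast
  then show ?thesis using None by (simp add: gain_eq)
next
  case (Some k)
  then show ?thesis using greedy_choice_Some[OF Some] assms by (simp add: gain_eq)
qed

lemma greedy_alloc_subset_N: "set p \<subseteq> N \<Longrightarrow> greedy_alloc ch p j \<subseteq> N"
  using greedy_alloc_subset[of ch p j] by blast

lemma hybrid_alloc_subset_N: "set p \<subseteq> N \<Longrightarrow> hybrid_alloc p j \<subseteq> N"
  using greedy_alloc_subset_N by (auto simp: hybrid_alloc_def)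

lemma hybrid_minus_greedy_le_sum_gain:
  assumes p: "set p \<subseteq> N"
  shows "hybrid_value p - greedy_value p \<le> (\<Sum>i\<in>N - set p. gain p i)"
proof -
  let ?S = "greedy_alloc ch p" and ?R = "N - set p"
  have "hybrid_value p - greedy_value p = (\<Sum>j<n. f j (?S j \<union> (Opt j \<inter> ?R)) - f j (?S j))"
    by (simp add: hybrid_value_def greedy_value_def welfare_def hybrid_alloc_def sum_subtractf)
  also have "\<dots> \<le> (\<Sum>j<n. \<Sum>i\<in>Opt j \<inter> ?R. gain p i)"
  proof (rule sum_mono)
    fix j assume "j \<in> {..<n}"
    then have j: "j < n" by simp
    have "f j (?S j \<union> (Opt j \<inter> ?R)) - f j (?S j) \<le> (\<Sum>i\<in>Opt j \<inter> ?R. marginal f ?S j i)"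
      unfolding marginal_def
      by (rule submodular_on_diff_le_sum_marginals[of N])
         (use j submodular finite_N greedy_alloc_subset_N[OF p] greedy_alloc_subset[of ch p j]
          in auto)
    also have "\<dots> \<le> (\<Sum>i\<in>Opt j \<inter> ?R. gain p i)"
      by (rule sum_mono) (rule marginal_le_gain[OF j])
    finally show "f j (?S j \<union> (Opt j \<inter> ?R)) - f j (?S j) \<le> (\<Sum>i\<in>Opt j \<inter> ?R. gain p i)" .
  qed
  also have "\<dots> \<le> (\<Sum>i\<in>?R. gain p i)"
    by (rule sum_disjoint_parts_le) (use finite_N gain_nonneg Opt_disjoint in auto)
  finally show ?thesis .
qed

definition extra_marginal :: "'a list \<Rightarrow> nat \<Rightarrow> 'a \<Rightarrow> real" where
  "extra_marginal p j i = (if ch p (greedy_alloc ch p) i = Some j \<and> i \<notin> Opt j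
                            then marginal f (hybrid_alloc p) j i else 0)"

text \<open>An arriving item of Opt j that the greedy rule does not give to j leaves the hybrid
  allocation of j; by diminishing returns this costs at most its marginal value for the
  greedy set of j, hence at most its gain.\<close>
lemma hybrid_bidder_change_ge:
  assumes p: "set p \<subseteq> N" and j: "j < n" and i: "i \<in> N - set p"
  shows "extra_marginal p j i - (if i \<in> Opt j then gain p i else 0)
       \<le> f j (hybrid_alloc (p @ [i]) j) - f j (hybrid_alloc p j)"
proof -
  let ?S = "greedy_alloc ch p" and ?H = "hybrid_alloc p j"
  have iS: "i \<notin> ?S j" using greedy_alloc_subset[of ch p j] i by auto
  show ?thesis
  proof (cases "ch p ?S i = Some j")
    case True
    then have "greedy_alloc ch (p @ [i]) j = ?S j \<union> {i}"
      by (simp add: greedy_alloc_snoc assign_def)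
    then have "hybrid_alloc (p @ [i]) j = (if i \<in> Opt j then ?H else ?H \<union> {i})"
      using i by (auto simp: hybrid_alloc_def)
    then show ?thesis using True gain_nonneg[of p i] by (simp add: extra_marginal_def marginal_def)
  next
    case False
    then have S': "greedy_alloc ch (p @ [i]) j = ?S j"
      by (cases "ch p ?S i") (auto simp: greedy_alloc_snoc assign_def)
    show ?thesis
    proof (cases "i \<in> Opt j")
      case True
      have H': "hybrid_alloc (p @ [i]) j = ?H - {i}"
        using S' iS by (auto simp: hybrid_alloc_def)
      have "f j ((?H - {i}) \<union> {i}) - f j (?H - {i}) \<le> f j (?S j \<union> {i}) - f j (?S j)"
        by (rule submodular_on_marginal_antimono[of N])
           (use submodular j i iS hybrid_alloc_subset_N[OF p, of j] in \<open>auto simp: hybrid_alloc_def\<close>)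
      moreover have "(?H - {i}) \<union> {i} = ?H" using True i by (auto simp: hybrid_alloc_def)
      moreover have "f j (?S j \<union> {i}) - f j (?S j) \<le> gain p i"
        using marginal_le_gain[OF j, of p i] by (simp add: marginal_def)
      ultimately show ?thesis using H' True False by (simp add: extra_marginal_def)
    next
      case False
      then have "hybrid_alloc (p @ [i]) j = ?H"
        using S' by (auto simp: hybrid_alloc_def)
      then show ?thesis using False \<open>ch p ?S i \<noteq> Some j\<close> by (simp add: extra_marginal_def)
    qed
  qed
qed

lemma neg_hybrid_value_le_sum_extra_marginal:
  assumes p: "set p \<subseteq> N"
  shows "- hybrid_value p \<le> (\<Sum>j<n. \<Sum>i\<in>N - set p. extra_marginal p j i)"
proof -
  let ?R = "N - set p"
  define X where "X j = {i \<in> ?R. ch p (greedy_alloc ch p) i = Some j \<and> i \<notin> Opt j}" for j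
  have fin: "finite ?R" using finite_N by simp
  have "- f j (hybrid_alloc p j) \<le> (\<Sum>i\<in>?R. extra_marginal p j i)" if j: "j < n" for j
  proof -
    have "- f j (hybrid_alloc p j) \<le> (\<Sum>i\<in>X j. marginal f (hybrid_alloc p) j i)"
      unfolding marginal_def
      by (rule submodular_on_neg_le_sum_marginals[of N])
         (use j submodular nonneg fin hybrid_alloc_subset_N[OF p, of j]
           greedy_alloc_subset[of ch p j] in \<open>auto simp: X_def hybrid_alloc_def\<close>)
    then show ?thesis
      unfolding X_def sum.inter_filter[OF fin] extra_marginal_def .
  qed
  then have "(\<Sum>j<n. - f j (hybrid_alloc p j)) \<le> (\<Sum>j<n. \<Sum>i\<in>?R. extra_marginal p j i)"
    by (intro sum_mono) auto
  then show ?thesis by (simp add: hybrid_value_def welfare_def sum_negf)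
qed

lemma sum_hybrid_change_ge:
  assumes p: "set p \<subseteq> N"
  shows "- (\<Sum>i\<in>N - set p. gain p i) - hybrid_value p
         \<le> (\<Sum>i\<in>N - set p. hybrid_value (p @ [i]) - hybrid_value p)"
proof -
  let ?R = "N - set p"
  define B where "B j i = (if i \<in> Opt j then gain p i else 0)" for j i
  have fin: "finite ?R" using finite_N by simp
  have "(\<Sum>j<n. \<Sum>i\<in>?R. B j i) = (\<Sum>j<n. \<Sum>i\<in>Opt j \<inter> ?R. gain p i)"
    unfolding B_def by (simp add: sum.inter_filter[OF fin, symmetric] Int_def conj_commute)
  also have "\<dots> \<le> (\<Sum>i\<in>?R. gain p i)"
    by (rule sum_disjoint_parts_le) (use fin gain_nonneg Opt_disjoint in auto)
  finally have B: "(\<Sum>j<n. \<Sum>i\<in>?R. B j i) \<le> (\<Sum>i\<in>?R. gain p i)" .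
  have "(\<Sum>j<n. \<Sum>i\<in>?R. extra_marginal p j i) - (\<Sum>j<n. \<Sum>i\<in>?R. B j i)
      = (\<Sum>i\<in>?R. \<Sum>j<n. extra_marginal p j i - B j i)"
    by (simp add: sum_subtractf sum.swap[of _ ?R "{..<n}"])
  also have "\<dots> \<le> (\<Sum>i\<in>?R. \<Sum>j<n. f j (hybrid_alloc (p @ [i]) j) - f j (hybrid_alloc p j))"
    unfolding B_def by (intro sum_mono hybrid_bidder_change_ge[OF p]) auto
  also have "\<dots> = (\<Sum>i\<in>?R. hybrid_value (p @ [i]) - hybrid_value p)"
    by (simp add: hybrid_value_def welfare_def sum_subtractf)
  finally show ?thesis
    using B neg_hybrid_value_le_sum_extra_marginal[OF p] by linarith
qed

definition avg_greedy :: "nat \<Rightarrow> real" where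
  "avg_greedy k = prefix_avg N k greedy_value"

definition avg_total :: "nat \<Rightarrow> real" where
  "avg_total k = prefix_avg N k (\<lambda>p. greedy_value p + hybrid_value p)"

lemma avg_greedy_Suc:
  assumes "k < card N"
  shows "avg_greedy (Suc k) =
    prefix_avg N k (\<lambda>p. greedy_value p + (\<Sum>i\<in>N - set p. gain p i) / real (card N - k))"
  unfolding avg_greedy_def gain_def by (rule prefix_avg_Suc_increment[OF finite_N assms])

lemma avg_greedy_mono:
  assumes "k < card N"
  shows "avg_greedy k \<le> avg_greedy (Suc k)"
proof -
  have "avg_greedy k \<le> prefix_avg N k (\<lambda>p. greedy_value p + (\<Sum>i\<in>N - set p. gain p i) / real (card N - k))"
    unfolding avg_greedy_def by (intro prefix_avg_mono) (simp add: sum_nonneg gain_nonneg)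
  then show ?thesis by (simp only: avg_greedy_Suc[OF assms])
qed

lemma avg_greedy_step:
  assumes "k < card N"
  shows "avg_greedy k + (avg_total k - 2 * avg_greedy k) / real (card N - k) \<le> avg_greedy (Suc k)"
proof -
  define M where "M = real (card N - k)"
  have M: "M > 0" using assms by (simp add: M_def)
  have "avg_greedy k + (avg_total k - 2 * avg_greedy k) / M
      = prefix_avg N k (\<lambda>p. (1 - 2 / M) * greedy_value p + (1 / M) * (greedy_value p + hybrid_value p))"
    unfolding prefix_avg_linear avg_greedy_def avg_total_def using M by (simp add: field_simps)
  also have "\<dots> \<le> prefix_avg N k (\<lambda>p. greedy_value p + (\<Sum>i\<in>N - set p. gain p i) / M)"
  proof (rule prefix_avg_mono)
    fix p assume "p \<in> prefixes N k"
    then have "(hybrid_value p - greedy_value p) / M \<le> (\<Sum>i\<in>N - set p. gain p i) / M"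
      using M hybrid_minus_greedy_le_sum_gain by (intro divide_right_mono) (auto simp: prefixes_def)
    moreover have "(1 - 2 / M) * greedy_value p + (1 / M) * (greedy_value p + hybrid_value p)
        = greedy_value p + (hybrid_value p - greedy_value p) / M"
      using M by (simp add: field_simps)
    ultimately show "(1 - 2 / M) * greedy_value p + (1 / M) * (greedy_value p + hybrid_value p)
        \<le> greedy_value p + (\<Sum>i\<in>N - set p. gain p i) / M"
      by linarith
  qed
  also have "\<dots> = avg_greedy (Suc k)"
    by (simp only: avg_greedy_Suc[OF assms] M_def)
  finally show ?thesis by (simp only: M_def)
qed

lemma avg_total_step:
  assumes "k < card N"
  shows "avg_total k + (avg_greedy k - avg_total k) / real (card N - k) \<le> avg_total (Suc k)"
proof -
  define M where "M = real (card N - k)"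
  have M: "M > 0" using assms by (simp add: M_def)
  let ?V = "\<lambda>p. greedy_value p + hybrid_value p"
  have "avg_total k + (avg_greedy k - avg_total k) / M
      = prefix_avg N k (\<lambda>p. (1 - 1 / M) * ?V p + (1 / M) * greedy_value p)"
    unfolding prefix_avg_linear avg_greedy_def avg_total_def using M by (simp add: field_simps)
  also have "\<dots> \<le> prefix_avg N k (\<lambda>p. ?V p + (\<Sum>i\<in>N - set p. ?V (p @ [i]) - ?V p) / M)"
  proof (rule prefix_avg_mono)
    fix p assume "p \<in> prefixes N k"
    then have "- hybrid_value p \<le> (\<Sum>i\<in>N - set p. gain p i)
        + (\<Sum>i\<in>N - set p. hybrid_value (p @ [i]) - hybrid_value p)"
      using sum_hybrid_change_ge by (force simp: prefixes_def)
    also have "\<dots> = (\<Sum>i\<in>N - set p. ?V (p @ [i]) - ?V p)"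
      by (simp add: gain_def sum.distrib[symmetric] algebra_simps)
    finally have "- hybrid_value p / M \<le> (\<Sum>i\<in>N - set p. ?V (p @ [i]) - ?V p) / M"
      using M by (intro divide_right_mono) auto
    moreover have "(1 - 1 / M) * ?V p + (1 / M) * greedy_value p = ?V p + - hybrid_value p / M"
      using M by (simp add: field_simps)
    ultimately show "(1 - 1 / M) * ?V p + (1 / M) * greedy_value p
        \<le> ?V p + (\<Sum>i\<in>N - set p. ?V (p @ [i]) - ?V p) / M"
      by linarith
  qed
  also have "\<dots> = avg_total (Suc k)"
    unfolding avg_total_def M_def by (rule prefix_avg_Suc_increment[OF finite_N assms, symmetric])
  finally show ?thesis by (simp only: M_def)
qed

lemma avg_greedy_0: "avg_greedy 0 = greedy_value []"
  by (simp add: avg_greedy_def prefix_avg_def prefixes_0)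

lemma avg_total_0: "avg_total 0 = greedy_value [] + welfare n f Opt"
proof -
  have "hybrid_value [] = welfare n f Opt"
    unfolding hybrid_value_def welfare_def hybrid_alloc_def using Opt_subset
    by (intro sum.cong) (auto simp: greedy_alloc_Nil Int_absorb2)
  then show ?thesis by (simp add: avg_total_def prefix_avg_def prefixes_0)
qed

lemma avg_greedy_card: "avg_greedy (card N) = expected_greedy N n f ch"
  by (simp add: avg_greedy_def prefix_avg_def expected_greedy_def
      prefixes_card_eq_permutations[OF finite_N] greedy_value_def)

lemma greedy_value_Nil_nonneg: "0 \<le> greedy_value []"
  unfolding greedy_value_def welfare_def using nonneg
  by (auto simp: greedy_alloc_Nil intro!: sum_nonneg)

lemma welfare_Opt_nonneg: "0 \<le> welfare n f Opt"
  unfolding welfare_def using nonneg Opt_subset by (auto intro!: sum_nonneg)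

lemma welfare_Opt_if_no_items:
  assumes "card N = 0"
  shows "welfare n f Opt = avg_greedy 0"
proof -
  have "\<forall>j<n. Opt j = {}" using assms finite_N Opt_subset by auto
  then show ?thesis
    unfolding avg_greedy_0 welfare_def greedy_value_def by (simp add: greedy_alloc_Nil)
qed

end

section \<open>Solving the recurrences\<close>

text \<open>The averaged recurrences discretise w' = v - 2 w, v' = w - v, whose matrix has the
  eigenvalues - rate_a and - rate_b.\<close>
definition rate_a :: real where "rate_a = (3 - sqrt 5) / 2"
definition rate_b :: real where "rate_b = (3 + sqrt 5) / 2"

lemma sqrt5_bounds: "2.236 \<le> sqrt (5::real)" "sqrt (5::real) \<le> 2.2361"
proof -
  show "2.236 \<le> sqrt (5::real)" by (rule real_le_rsqrt) (simp add: power2_eq_square)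
  have "sqrt (5::real) \<le> sqrt (2.2361 ^ 2)" by (rule real_sqrt_le_mono) (simp add: power2_eq_square)
  then show "sqrt (5::real) \<le> 2.2361" by simp
qed

lemma rate_a_bounds: "0.38195 \<le> rate_a" "rate_a \<le> 0.382"
  using sqrt5_bounds by (auto simp: rate_a_def)

lemma rate_b_bounds: "2.618 \<le> rate_b" "rate_b \<le> 2.61805"
  using sqrt5_bounds by (auto simp: rate_b_def)

lemma rate_b_minus_rate_a: "rate_b - rate_a = sqrt 5"
  by (simp add: rate_a_def rate_b_def field_simps)

lemma rate_a_times_rate_b: "rate_a * rate_b = 1"
  by (simp add: rate_a_def rate_b_def field_simps)

lemma rate_a_root: "rate_a ^ 2 - 3 * rate_a + 1 = 0"
  by (simp add: rate_a_def power2_eq_square field_simps)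

lemma rate_b_root: "rate_b ^ 2 - 3 * rate_b + 1 = 0"
  by (simp add: rate_b_def power2_eq_square field_simps)

text \<open>Discrete analogue of (l / m) powr c.\<close>
definition decay_prod :: "real \<Rightarrow> nat \<Rightarrow> nat \<Rightarrow> real" where
  "decay_prod c l m = (\<Prod>r\<in>{l<..m}. 1 - c / real r)"

lemma decay_prod_self: "decay_prod c l l = 1"
  by (simp add: decay_prod_def)

lemma decay_prod_pull: "l < m \<Longrightarrow> decay_prod c l m = (1 - c / real m) * decay_prod c l (m - 1)"
proof -
  assume "l < m"
  then have "{l<..m} = insert m {l<..m - 1}" "m \<notin> {l<..m - 1}" by auto
  then show ?thesis by (simp add: decay_prod_def)
qed

lemma decay_factor_bounds:
  fixes r :: real
  assumes "3 \<le> r"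
  shows "0 \<le> 1 - rate_b / r" "1 - rate_b / r \<le> 1 - 2.618 / r"
    and "0 \<le> 1 - 0.382 / r" "1 - 0.382 / r \<le> 1 - rate_a / r"
    and "1 - rate_b / r \<le> 1 - rate_a / r"
proof -
  have "rate_a / r \<le> rate_b / r"
    using assms rate_a_bounds rate_b_bounds by (intro divide_right_mono) auto
  then show "1 - rate_b / r \<le> 1 - rate_a / r" by simp
  show "0 \<le> 1 - rate_b / r" "0 \<le> 1 - 0.382 / r"
    using assms rate_b_bounds by (simp_all add: field_simps)
  have "2.618 / r \<le> rate_b / r" using assms rate_b_bounds by (intro divide_right_mono) auto
  moreover have "rate_a / r \<le> 0.382 / r" using assms rate_a_bounds by (intro divide_right_mono) auto
  ultimately show "1 - rate_b / r \<le> 1 - 2.618 / r" "1 - 0.382 / r \<le> 1 - rate_a / r" by simp_all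
qed

lemma decay_prod_bounds:
  assumes "2 \<le> l"
  shows "0 \<le> decay_prod rate_b l m" "decay_prod rate_b l m \<le> decay_prod rate_a l m"
    and "decay_prod 0.382 l m - decay_prod 2.618 l m \<le> decay_prod rate_a l m - decay_prod rate_b l m"
proof -
  have r: "3 \<le> real r" if "r \<in> {l<..m}" for r using that assms by simp
  show "0 \<le> decay_prod rate_b l m"
    unfolding decay_prod_def using decay_factor_bounds(1)[OF r] by (intro prod_nonneg) auto
  show "decay_prod rate_b l m \<le> decay_prod rate_a l m"
    unfolding decay_prod_def using decay_factor_bounds(1,5)[OF r] by (intro prod_mono) auto
  have "decay_prod 0.382 l m \<le> decay_prod rate_a l m"
    unfolding decay_prod_def using decay_factor_bounds(3,4)[OF r] by (intro prod_mono) auto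
  moreover have "decay_prod rate_b l m \<le> decay_prod 2.618 l m"
    unfolding decay_prod_def using decay_factor_bounds(1,2)[OF r] by (intro prod_mono) auto
  ultimately show "decay_prod 0.382 l m - decay_prod 2.618 l m
      \<le> decay_prod rate_a l m - decay_prod rate_b l m" by simp
qed

text \<open>One step back through the transposed recurrences, acting on the coefficients of w and
  v; this is where rate_a and rate_b being the roots of x^2 - 3 x + 1 enters.\<close>
lemma decay_weights_step:
  fixes P Q h :: real
  shows "(1 - rate_a) * ((1 - rate_a * h) * P) + (rate_b - 1) * ((1 - rate_b * h) * Q)
       = (1 - 2 * h) * ((1 - rate_a) * P + (rate_b - 1) * Q) + h * (P - Q)"
    and "(1 - rate_a * h) * P - (1 - rate_b * h) * Q
       = h * ((1 - rate_a) * P + (rate_b - 1) * Q) + (1 - h) * (P - Q)"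
proof -
  have "(1 - rate_a) * ((1 - rate_a * h) * P) + (rate_b - 1) * ((1 - rate_b * h) * Q)
      = (1 - 2 * h) * ((1 - rate_a) * P + (rate_b - 1) * Q) + h * (P - Q)
        + h * P * (rate_a ^ 2 - 3 * rate_a + 1) - h * Q * (rate_b ^ 2 - 3 * rate_b + 1)"
    by (simp add: algebra_simps power2_eq_square)
  then show "(1 - rate_a) * ((1 - rate_a * h) * P) + (rate_b - 1) * ((1 - rate_b * h) * Q)
       = (1 - 2 * h) * ((1 - rate_a) * P + (rate_b - 1) * Q) + h * (P - Q)"
    by (simp add: rate_a_root rate_b_root)
  show "(1 - rate_a * h) * P - (1 - rate_b * h) * Q
       = h * ((1 - rate_a) * P + (rate_b - 1) * Q) + (1 - h) * (P - Q)"
    by (simp add: algebra_simps)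
qed

lemma recurrence_lower_bound:
  fixes w v :: "nat \<Rightarrow> real" and l m :: nat
  assumes l: "2 \<le> l" "l \<le> m"
    and w_step: "\<And>k. k < m \<Longrightarrow> w k + (v k - 2 * w k) / real (m - k) \<le> w (Suc k)"
    and v_step: "\<And>k. k < m \<Longrightarrow> v k + (w k - v k) / real (m - k) \<le> v (Suc k)"
  shows "((1 - rate_a) * decay_prod rate_a l m + (rate_b - 1) * decay_prod rate_b l m) * w 0
       + (decay_prod rate_a l m - decay_prod rate_b l m) * v 0 \<le> sqrt 5 * w (m - l)"
proof -
  define K where "K = m - l"
  define A where "A k = (1 - rate_a) * decay_prod rate_a l (m - k)
                        + (rate_b - 1) * decay_prod rate_b l (m - k)" for k
  define B where "B k = decay_prod rate_a l (m - k) - decay_prod rate_b l (m - k)" for k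
  have AB_nonneg: "0 \<le> A k" "0 \<le> B k" for k
    using decay_prod_bounds(1,2)[OF l(1), of "m - k"] rate_a_bounds rate_b_bounds
    by (auto simp: A_def B_def intro!: add_nonneg_nonneg mult_nonneg_nonneg)
  have "A (K - j) * w (K - j) + B (K - j) * v (K - j) \<le> sqrt 5 * w K" if "j \<le> K" for j
    using that
  proof (induction j)
    case 0
    have "A K = sqrt 5" "B K = 0"
      using rate_b_minus_rate_a by (simp_all add: A_def B_def K_def l decay_prod_self algebra_simps)
    then show ?case by simp
  next
    case (Suc j)
    define k where "k = K - Suc j"
    have k: "k < K" "Suc k = K - j" using Suc.prems by (auto simp: k_def)
    define h where "h = 1 / real (m - k)"
    have "l < m - k" using k by (simp add: K_def)
    then have "decay_prod c l (m - k) = (1 - c * h) * decay_prod c l (m - Suc k)" for c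
      using decay_prod_pull[of l "m - k" c] by (simp add: h_def)
    then have AB: "A k = (1 - 2 * h) * A (Suc k) + h * B (Suc k)"
      "B k = h * A (Suc k) + (1 - h) * B (Suc k)"
      unfolding A_def B_def by (simp_all only: decay_weights_step)
    have "w k + h * (v k - 2 * w k) \<le> w (Suc k)" "v k + h * (w k - v k) \<le> v (Suc k)"
      using w_step[of k] v_step[of k] k by (simp_all add: h_def K_def)
    then have "A (Suc k) * (w k + h * (v k - 2 * w k)) + B (Suc k) * (v k + h * (w k - v k))
        \<le> A (Suc k) * w (Suc k) + B (Suc k) * v (Suc k)"
      by (intro add_mono mult_left_mono AB_nonneg)
    moreover have "A k * w k + B k * v k
        = A (Suc k) * (w k + h * (v k - 2 * w k)) + B (Suc k) * (v k + h * (w k - v k))"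
      unfolding AB by (simp add: algebra_simps)
    moreover have "A (Suc k) * w (Suc k) + B (Suc k) * v (Suc k) \<le> sqrt 5 * w K"
      using Suc k by simp
    ultimately show ?case by (simp add: k_def)
  qed
  from this[of K] show ?thesis by (simp add: A_def B_def K_def)
qed

lemma recurrence_stopped_bound:
  fixes w v :: "nat \<Rightarrow> real" and l m :: nat and Q :: real
  assumes l: "2 \<le> l" "l \<le> m"
    and w_step: "\<And>k. k < m \<Longrightarrow> w k + (v k - 2 * w k) / real (m - k) \<le> w (Suc k)"
    and v_step: "\<And>k. k < m \<Longrightarrow> v k + (w k - v k) / real (m - k) \<le> v (Suc k)"
    and w_mono: "\<And>k. k < m \<Longrightarrow> w k \<le> w (Suc k)"
    and "0 \<le> w 0" "v 0 = w 0 + Q" "0 \<le> Q"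
  shows "(decay_prod rate_a l m - decay_prod rate_b l m) * Q \<le> sqrt 5 * w m"
proof -
  define A where "A = (1 - rate_a) * decay_prod rate_a l m + (rate_b - 1) * decay_prod rate_b l m"
  define B where "B = decay_prod rate_a l m - decay_prod rate_b l m"
  have "0 \<le> A" "0 \<le> B"
    using decay_prod_bounds(1,2)[OF l(1), of m] rate_a_bounds rate_b_bounds
    by (auto simp: A_def B_def intro!: add_nonneg_nonneg mult_nonneg_nonneg)
  then have "0 \<le> A * w 0 + B * w 0"
    using \<open>0 \<le> w 0\<close> by (intro add_nonneg_nonneg mult_nonneg_nonneg)
  then have "B * Q \<le> A * w 0 + B * v 0"
    using \<open>v 0 = w 0 + Q\<close> by (simp add: distrib_left)
  also have "\<dots> \<le> sqrt 5 * w (m - l)"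
    unfolding A_def B_def by (rule recurrence_lower_bound[OF l w_step v_step])
  also have "\<dots> \<le> sqrt 5 * w m"
    using lift_Suc_mono_le_ivl[of "{..<m}" w "m - l" m] w_mono by (simp add: subset_eq)
  finally show ?thesis by (simp add: B_def)
qed

section \<open>The constant\<close>

lemma rate_a_pos: "0 < rate_a" and rate_b_pos: "0 < rate_b"
  using rate_a_bounds rate_b_bounds by auto

lemma rate_a_div_rate_b: "rate_a / rate_b = rate_a ^ 2"
  using rate_a_times_rate_b rate_b_pos by (simp add: field_simps power2_eq_square)

text \<open>The maximiser of t powr rate_a - t powr rate_b on (0, 1); the constant x of
  greedy_ratio is - ln r_star.\<close>
definition r_star :: real where "r_star = exp (- (ln (rate_b / rate_a) / sqrt 5))"

lemma r_star_pos: "0 < r_star"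
  by (simp add: r_star_def)

lemma greedy_ratio_eq: "greedy_ratio = (r_star powr rate_a - r_star powr rate_b) / sqrt 5"
proof -
  have powr: "r_star powr c = exp (- c * (ln (rate_b / rate_a) / sqrt 5))" for c
    unfolding r_star_def powr_def by simp
  have "greedy_ratio = (exp (- rate_a * (ln (rate_b / rate_a) / sqrt 5))
      - exp (- rate_b * (ln (rate_b / rate_a) / sqrt 5))) / sqrt 5"
    unfolding greedy_ratio_def Let_def rate_a_def rate_b_def ..
  then show ?thesis unfolding powr .
qed

lemma r_star_powr_sqrt5: "r_star powr sqrt 5 = rate_a / rate_b"
proof -
  have "r_star powr sqrt 5 = exp (- ln (rate_b / rate_a))"
    by (simp add: r_star_def powr_def)
  also have "\<dots> = rate_a / rate_b"
    using rate_a_pos rate_b_pos by (simp add: exp_minus)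
  finally show ?thesis .
qed

lemma r_star_powr_rate_b: "r_star powr rate_b = r_star powr rate_a * (rate_a / rate_b)"
proof -
  have "r_star powr rate_b = r_star powr (rate_a + sqrt 5)"
    using rate_b_minus_rate_a by (simp add: algebra_simps)
  also have "\<dots> = r_star powr rate_a * (rate_a / rate_b)"
    by (simp add: powr_add r_star_powr_sqrt5)
  finally show ?thesis .
qed

lemma greedy_ratio_eq_rate_a: "greedy_ratio = rate_a * r_star powr rate_a"
proof -
  have inv: "1 / rate_b = rate_a"
    using rate_a_times_rate_b rate_b_pos by (simp add: field_simps)
  have "1 - rate_a / rate_b = (rate_b - rate_a) * (1 / rate_b)"
    using rate_b_pos by (simp add: field_simps)
  also have "\<dots> = sqrt 5 * rate_a" by (simp only: inv rate_b_minus_rate_a)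
  finally have gap: "1 - rate_a / rate_b = sqrt 5 * rate_a" .
  have "r_star powr rate_a - r_star powr rate_b = r_star powr rate_a * (1 - rate_a / rate_b)"
    by (simp add: r_star_powr_rate_b right_diff_distrib)
  also have "\<dots> = sqrt 5 * (rate_a * r_star powr rate_a)"
    unfolding gap by (simp add: mult_ac)
  finally show ?thesis by (simp add: greedy_ratio_eq)
qed

lemma greedy_ratio_nonneg: "0 \<le> greedy_ratio"
  using rate_a_pos by (simp add: greedy_ratio_eq_rate_a)

lemma powr_divide_nat_power:
  fixes x :: real
  assumes "0 < x" "0 < q"
  shows "(x powr (real p / real q)) ^ q = x ^ p"
proof -
  have "(x powr (real p / real q)) ^ q = x powr (real q * (real p / real q))"
    using assms by (simp add: powr_power)
  also have "real q * (real p / real q) = real p" using assms by simp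
  finally show ?thesis using assms by (simp add: powr_realpow)
qed

lemma r_star_upper: "r_star \<le> 0.44"
proof (rule ccontr)
  assume "\<not> r_star \<le> 0.44"
  then have "(0.44::real) powr (9/4) \<le> r_star powr sqrt 5"
    using sqrt5_bounds
    by (intro order.trans[OF powr_mono'[of "sqrt 5" "9/4"] powr_mono2]) auto
  also have "\<dots> \<le> 0.382 ^ 2"
    using rate_a_bounds rate_a_pos
    by (simp add: r_star_powr_sqrt5 rate_a_div_rate_b power_mono)
  finally have "((0.44::real) powr (real 9 / real 4)) ^ 4 \<le> (0.382 ^ 2) ^ 4"
    by (intro power_mono) auto
  moreover have "((0.44::real) powr (real 9 / real 4)) ^ 4 = 0.44 ^ 9"
    by (rule powr_divide_nat_power) auto
  ultimately show False by (simp add: power_divide)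
qed

lemma r_star_lower: "0.4 \<le> r_star"
proof (rule ccontr)
  assume "\<not> 0.4 \<le> r_star"
  have "0.38195 ^ 2 \<le> r_star powr sqrt 5"
    using rate_a_bounds by (simp add: r_star_powr_sqrt5 rate_a_div_rate_b power_mono)
  also have "\<dots> \<le> 0.4 powr (11/5)"
    using \<open>\<not> 0.4 \<le> r_star\<close> r_star_pos sqrt5_bounds
    by (intro order.trans[OF powr_mono2 powr_mono'[of "11/5" "sqrt 5"]]) auto
  finally have "(0.38195 ^ 2) ^ 5 \<le> ((0.4::real) powr (real 11 / real 5)) ^ 5"
    by (intro power_mono) auto
  moreover have "((0.4::real) powr (real 11 / real 5)) ^ 5 = 0.4 ^ 11"
    by (rule powr_divide_nat_power) auto
  ultimately show False by (simp add: power_divide)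
qed

lemma greedy_ratio_le: "greedy_ratio \<le> 0.29"
proof -
  have "r_star powr rate_a \<le> 0.44 powr (19/50)"
    using r_star_upper r_star_pos rate_a_bounds
    by (intro order.trans[OF powr_mono2 powr_mono'[of "19/50" rate_a]]) auto
  also have "\<dots> \<le> 0.74"
  proof (rule ccontr)
    assume "\<not> (0.44::real) powr (19/50) \<le> 0.74"
    then have "(0.74::real) ^ 50 < ((0.44::real) powr (real 19 / real 50)) ^ 50"
      by (intro power_strict_mono) auto
    moreover have "((0.44::real) powr (real 19 / real 50)) ^ 50 = 0.44 ^ 19"
      by (rule powr_divide_nat_power) auto
    ultimately show False by (simp add: power_divide)
  qed
  finally have "rate_a * r_star powr rate_a \<le> 0.382 * 0.74"
    using rate_a_bounds rate_a_pos by (intro mult_mono) auto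
  then show ?thesis by (simp add: greedy_ratio_eq_rate_a)
qed

section \<open>Estimating the products\<close>

lemma ln_one_minus_le_cubic:
  fixes y :: real assumes "0 \<le> y" "y < 1"
  shows "ln (1 - y) \<le> - (y + y^2/2 + y^3/3)"
proof -
  define F where "F t = - (t + t^2/2 + t^3/3) - ln (1 - t)" for t :: real
  have "F 0 \<le> F y"
  proof (rule DERIV_nonneg_imp_nondecreasing[OF assms(1)])
    fix x assume x: "0 \<le> x" "x \<le> y"
    then have x1: "x < 1" using assms by simp
    have "(F has_real_derivative (- (1 + x + x^2) + 1 / (1 - x))) (at x)"
      unfolding F_def using x1
      by (auto intro!: derivative_eq_intros simp: field_simps power2_eq_square)
    moreover have "0 \<le> - (1 + x + x^2) + 1 / (1 - x)"
    proof -
      have "(1 - x) * (1 + x + x^2) \<le> 1" using x by (simp add: algebra_simps power2_eq_square power3_eq_cube)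
      then have "1 + x + x^2 \<le> 1 / (1 - x)" using x1 by (simp add: field_simps)
      then show ?thesis by simp
    qed
    ultimately show "\<exists>d. (F has_real_derivative d) (at x) \<and> 0 \<le> d" by blast
  qed
  then show ?thesis by (simp add: F_def)
qed

lemma ln_ge_half_diff_inverse:
  fixes u :: real assumes "0 < u" "u \<le> 1"
  shows "(u - 1 / u) / 2 \<le> ln u"
proof -
  define F where "F t = ln t - (t - 1 / t) / 2" for t :: real
  have "F 1 \<le> F u"
  proof (rule DERIV_nonpos_imp_nonincreasing[OF assms(2)])
    fix z assume z: "u \<le> z" "z \<le> 1"
    then have z0: "z > 0" using assms by simp
    have "(F has_real_derivative (- ((z - 1)^2 / (2 * z^2)))) (at z)"
      unfolding F_def using z0
      by (auto intro!: derivative_eq_intros simp: field_simps power2_eq_square)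
    moreover have "- ((z - 1)^2 / (2 * z^2)) \<le> 0" by simp
    ultimately show "\<exists>d. (F has_real_derivative d) (at z) \<and> d \<le> 0" by blast
  qed
  then show ?thesis by (simp add: F_def)
qed

lemma ln_one_minus_ge_quadratic:
  fixes x :: real assumes "0 \<le> x" "x < 1"
  shows "- (x + x^2 / (2 * (1 - x))) \<le> ln (1 - x)"
proof -
  have "((1 - x) - 1 / (1 - x)) / 2 \<le> ln (1 - x)" by (rule ln_ge_half_diff_inverse) (use assms in auto)
  moreover have "((1 - x) - 1 / (1 - x)) / 2 = - (x + x^2 / (2 * (1 - x)))"
    using assms by (simp add: field_simps power2_eq_square)
  ultimately show ?thesis by simp
qed

lemma ln_ge_cubic:
  fixes u :: real assumes "0 < u" "u \<le> 1"
  shows "- ((1 - u) + (1 - u)^2 / 2 + (1 - u)^3 / (3 * u)) \<le> ln u"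
proof -
  define F where "F t = ln t + ((1 - t) + (1 - t)^2 / 2 + (1 - t)^3 / (3 * t))" for t :: real
  have "F 1 \<le> F u"
  proof (rule DERIV_nonpos_imp_nonincreasing[OF assms(2)])
    fix z assume z: "u \<le> z" "z \<le> 1"
    then have z0: "z > 0" using assms by simp
    have "(F has_real_derivative (- ((1 - z)^3 / (3 * z^2)))) (at z)"
      unfolding F_def using z0
      by (auto intro!: derivative_eq_intros simp: field_simps power2_eq_square power3_eq_cube)
    moreover have "- ((1 - z)^3 / (3 * z^2)) \<le> 0" using z by simp
    ultimately show "\<exists>d. (F has_real_derivative d) (at z) \<and> d \<le> 0" by blast
  qed
  then show ?thesis by (simp add: F_def)
qed

lemma ln_one_minus_ge_cubic:
  fixes y :: real assumes "0 \<le> y" "y < 1"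
  shows "- (y + y^2/2 + y^3 / (3 * (1 - y))) \<le> ln (1 - y)"
  using ln_ge_cubic[of "1 - y"] assms by simp


lemma series_bound_a:
  fixes r :: real assumes r: "6 \<le> r"
  shows "1/r + (191/500)/(2*r*(r - 191/500)) \<le> 1/(r+1/4) + (1/(r+1/4))^2/2 + (1/(r+1/4))^3/3"
proof -
  define t where "t = r - 6"
  define s where "s = r + 1/4"
  define q where "q = r - 191/500"
  have t: "0 \<le> t" using r by (auto simp: t_def)
  have pos: "r > 0" "s > 0" "q > 0" using r by (auto simp: s_def q_def)
  define d where "d = 1/s + (1/s)^2/2 + (1/s)^3/3 - (1/r + (191/500)/(2*r*q))"
  define D where "D = 12 * s^3 * (r * q)"
  have Dpos: "D > 0" using pos by (simp add: D_def)
  have eq1: "d * D = 12* s^2*r*q + 6* s*r*q + 4*r*q - 12* s^3*q - 6*(191/500)* s^3"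
    using pos unfolding d_def D_def by (simp add: field_simps power2_eq_square power3_eq_cube)
  have eq2: "12* s^2*r*q + 6* s*r*q + 4*r*q - 12* s^3*q - 6*(191/500)* s^3
     = 2895237/16000 + 70351/800 * t + 13879/1000 * t^2 + 177/250 * t^3"
    unfolding s_def q_def t_def by (simp add: field_simps power2_eq_square power3_eq_cube)
  have "0 \<le> 2895237/16000 + 70351/800 * t + 13879/1000 * t^2 + 177/250 * t^3"
    using t by (intro add_nonneg_nonneg mult_nonneg_nonneg) auto
  then have "0 \<le> d * D" using eq1 eq2 by simp
  then have "0 \<le> d" using Dpos by (simp add: zero_le_mult_iff)
  then show ?thesis by (simp add: d_def s_def q_def)
qed

lemma series_bound_b:
  fixes r :: real assumes r: "6 \<le> r"
  shows "1/(r-3/4) + (1/(r-3/4))^2/2 + (1/(r-3/4))^3/(3*(1 - 1/(r-3/4)))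
         \<le> 1/r + (1309/500)/(2*r^2) + (1309/500)^2/(3*r^3)"
proof -
  define t where "t = r - 6"
  define u where "u = r - 3/4"
  define z where "z = r - 7/4"
  have t: "0 \<le> t" using r by (auto simp: t_def)
  have pos: "r > 0" "u > 0" "z > 0" using r by (auto simp: u_def z_def)
  have e1: "1 - 1/u = z/u" using pos by (simp add: field_simps u_def z_def)
  define d where "d = 1/r + (1309/500)/(2*r^2) + (1309/500)^2/(3*r^3) - (1/u + (1/u)^2/2 + 1/(3 * u^2 * z))"
  define D where "D = 6 * r^3 * u^2 * z"
  have Dpos: "D > 0" using pos by (simp add: D_def)
  have eq1: "d * D = 6*r^2*u^2*z + 3*(1309/500)*r*u^2*z + 2*(1309/500)^2*u^2*z - 6*r^3*u*z - 3*r^3*z - 2*r^3"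
    using pos unfolding d_def D_def by (simp add: field_simps power2_eq_square power3_eq_cube)
  have eq2: "6*r^2*u^2*z + 3*(1309/500)*r*u^2*z + 2*(1309/500)^2*u^2*z - 6*r^3*u*z - 3*r^3*z - 2*r^3
     = 2602045557/8000000 + 261157197/800000 * t + 99324133/1000000 * t^2 + 2794587/250000 * t^3 + 177/500 * t^4"
    unfolding u_def z_def t_def by (simp add: field_simps power2_eq_square power3_eq_cube power4_eq_xxxx)
  have "0 \<le> 2602045557/8000000 + 261157197/800000 * t + 99324133/1000000 * t^2 + 2794587/250000 * t^3 + 177/500 * t^4"
    using t by (intro add_nonneg_nonneg mult_nonneg_nonneg) auto
  then have "0 \<le> d * D" using eq1 eq2 by simp
  then have "0 \<le> d" using Dpos by (simp add: zero_le_mult_iff)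
  moreover have "(1/u)^3/(3*(1 - 1/u)) = 1/(3 * u^2 * z)"
    unfolding e1 using pos by (simp add: field_simps power2_eq_square power3_eq_cube)
  ultimately show ?thesis by (simp add: d_def u_def)
qed

text \<open>The shifts are chosen so that these powers telescope over r, see prod_powr_telescope.\<close>
lemma shifted_ratio_powr_rate_a_le:
  fixes r :: real assumes r: "6 \<le> r"
  shows "((r - 3/4) / (r + 1/4)) powr rate_a \<le> 1 - rate_a / r"
proof -
  define y where "y = 1 / (r + 1/4)"
  define x where "x = rate_a / r"
  have a: "0.38195 \<le> rate_a" "rate_a \<le> 0.382" by (rule rate_a_bounds)+
  have y: "0 \<le> y" "y < 1" using r by (auto simp: y_def)
  have x: "0 \<le> x" "x < 1" using r a by (auto simp: x_def)
  have base: "(r - 3/4) / (r + 1/4) = 1 - y" using r by (simp add: y_def field_simps)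
  have "((r - 3/4) / (r + 1/4)) powr rate_a = exp (rate_a * ln (1 - y))"
    using y r by (simp add: base powr_def)
  also have "\<dots> \<le> exp (- rate_a * (y + y^2/2 + y^3/3))"
  proof -
    have "rate_a * ln (1 - y) \<le> rate_a * (- (y + y^2/2 + y^3/3))"
      by (rule mult_left_mono[OF ln_one_minus_le_cubic[OF y]]) (use a in simp)
    then show ?thesis by (simp add: algebra_simps)
  qed
  also have "\<dots> \<le> exp (- (x + x^2 / (2 * (1 - x))))"
  proof -
    have xe: "x + x^2 / (2 * (1 - x)) = rate_a * (1/r + rate_a/(2*r*(r - rate_a)))"
      using r a by (simp add: x_def field_simps power2_eq_square)
    have "rate_a/(2*r*(r - rate_a)) \<le> (191/500)/(2*r*(r - 191/500))"
    proof -
      have "rate_a * (2*r*(r - 191/500)) \<le> (191/500) * (2*r*(r - rate_a))"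
        using r a by (simp add: algebra_simps)
      then show ?thesis using r a by (simp add: field_simps)
    qed
    then have "1/r + rate_a/(2*r*(r - rate_a)) \<le> y + y^2/2 + y^3/3"
      using series_bound_a[OF r] unfolding y_def by linarith
    then have "rate_a * (1/r + rate_a/(2*r*(r - rate_a))) \<le> rate_a * (y + y^2/2 + y^3/3)"
      using a by (simp add: mult_left_mono)
    then show ?thesis using xe by simp
  qed
  also have "\<dots> \<le> exp (ln (1 - x))" using ln_one_minus_ge_quadratic[OF x] by simp
  also have "\<dots> = 1 - rate_a / r" using x by (simp add: x_def)
  finally show ?thesis .
qed

lemma le_shifted_ratio_powr_rate_b:
  fixes r :: real assumes r: "6 \<le> r"
  shows "1 - rate_b / r \<le> ((r - 7/4) / (r - 3/4)) powr rate_b"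
proof -
  define y where "y = 1 / (r - 3/4)"
  define x where "x = rate_b / r"
  have b: "2.618 \<le> rate_b" "rate_b \<le> 2.61805" by (rule rate_b_bounds)+
  have y: "0 \<le> y" "y < 1" using r by (auto simp: y_def)
  have x: "0 \<le> x" "x < 1" using r b by (auto simp: x_def)
  have base: "(r - 7/4) / (r - 3/4) = 1 - y" using r by (simp add: y_def field_simps)
  have "1 - rate_b / r = exp (ln (1 - x))" using x by (simp add: x_def)
  also have "\<dots> \<le> exp (- (x + x^2/2 + x^3/3))" using ln_one_minus_le_cubic[OF x] by simp
  also have "\<dots> \<le> exp (- rate_b * (y + y^2/2 + y^3 / (3 * (1 - y))))"
  proof -
    have xe: "x + x^2/2 + x^3/3 = rate_b * (1/r + rate_b/(2*r^2) + rate_b^2/(3*r^3))"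
      using r by (simp add: x_def field_simps power2_eq_square power3_eq_cube)
    have "1/r + (1309/500)/(2*r^2) + (1309/500)^2/(3*r^3) \<le> 1/r + rate_b/(2*r^2) + rate_b^2/(3*r^3)"
    proof -
      have "(1309/500)/(2*r^2) \<le> rate_b/(2*r^2)" using b r by (intro divide_right_mono) auto
      moreover have "(1309/500::real)^2 \<le> rate_b^2" using b by (intro power_mono) auto
      then have "(1309/500)^2/(3*r^3) \<le> rate_b^2/(3*r^3)" using r by (intro divide_right_mono) auto
      ultimately show ?thesis by linarith
    qed
    then have "y + y^2/2 + y^3 / (3 * (1 - y)) \<le> 1/r + rate_b/(2*r^2) + rate_b^2/(3*r^3)"
      using series_bound_b[OF r] unfolding y_def by linarith
    then have "rate_b * (y + y^2/2 + y^3 / (3 * (1 - y))) \<le> rate_b * (1/r + rate_b/(2*r^2) + rate_b^2/(3*r^3))"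
      using b by (simp add: mult_left_mono)
    then show ?thesis using xe by simp
  qed
  also have "\<dots> \<le> exp (rate_b * ln (1 - y))"
  proof -
    have "rate_b * (- (y + y^2/2 + y^3 / (3 * (1 - y)))) \<le> rate_b * ln (1 - y)"
      by (rule mult_left_mono[OF ln_one_minus_ge_cubic[OF y]]) (use b in simp)
    then show ?thesis by (simp add: algebra_simps)
  qed
  also have "\<dots> = ((r - 7/4) / (r - 3/4)) powr rate_b"
    using y r by (simp add: base powr_def)
  finally show ?thesis .
qed

lemma prod_powr_telescope:
  fixes c e :: real and l d :: nat
  assumes "real l + 1 + c > 0"
  shows "(\<Prod>r\<in>{l<..l + d}. ((real r + c) / (real r + c + 1)) powr e)
         = ((real l + 1 + c) / (real (l + d) + 1 + c)) powr e"
proof (induction d)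
  case 0
  then show ?case using assms by simp
next
  case (Suc d)
  have e: "{l<..l + Suc d} = insert (l + Suc d) {l<..l + d}" by auto
  have nin: "l + Suc d \<notin> {l<..l + d}" by auto
  have p1: "real (l + d) + 1 + c > 0" using assms by simp
  have "(\<Prod>r\<in>{l<..l + Suc d}. ((real r + c) / (real r + c + 1)) powr e)
      = ((real (l + Suc d) + c) / (real (l + Suc d) + c + 1)) powr e
        * ((real l + 1 + c) / (real (l + d) + 1 + c)) powr e"
    unfolding e using nin Suc.IH by simp
  also have "\<dots> = (((real (l + Suc d) + c) / (real (l + Suc d) + c + 1))
        * ((real l + 1 + c) / (real (l + d) + 1 + c))) powr e"
    by (rule powr_mult[symmetric]; use assms p1 in simp)
  also have "((real (l + Suc d) + c) / (real (l + Suc d) + c + 1))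
        * ((real l + 1 + c) / (real (l + d) + 1 + c)) = (real l + 1 + c) / (real (l + Suc d) + 1 + c)"
  proof -
    define X where "X = real (l + d) + 1 + c"
    have X: "X > 0" using p1 by (simp add: X_def)
    have e1: "real (l + Suc d) + c = X" "real (l + Suc d) + c + 1 = X + 1" "real (l + Suc d) + 1 + c = X + 1"
      by (simp_all add: X_def)
    have X1: "X + 1 \<noteq> 0" "X \<noteq> 0" using X by auto
    show ?thesis unfolding e1 X_def[symmetric] using X1 by (simp add: divide_simps)
  qed
  finally show ?case .
qed

lemma decay_prod_rate_a_ge:
  fixes l m :: nat assumes "5 \<le> l" "l \<le> m"
  shows "((real l + 1/4) / (real m + 1/4)) powr rate_a \<le> decay_prod rate_a l m"
proof -
  obtain d where m: "m = l + d" using assms le_Suc_ex by blast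
  have "((real l + 1/4) / (real m + 1/4)) powr rate_a
      = (\<Prod>r\<in>{l<..m}. ((real r + (-3/4)) / (real r + (-3/4) + 1)) powr rate_a)"
    using prod_powr_telescope[of l "-3/4" rate_a d] m by (simp add: add.commute add.left_commute)
  also have "\<dots> \<le> (\<Prod>r\<in>{l<..m}. 1 - rate_a / real r)"
  proof (rule prod_mono)
    fix r assume "r \<in> {l<..m}"
    then have r: "6 \<le> real r" using assms by simp
    have "((real r + (-3/4)) / (real r + (-3/4) + 1)) powr rate_a = ((real r - 3/4) / (real r + 1/4)) powr rate_a"
      by (simp add: algebra_simps)
    then show "0 \<le> ((real r + (-3/4)) / (real r + (-3/4) + 1)) powr rate_a \<and>
          ((real r + (-3/4)) / (real r + (-3/4) + 1)) powr rate_a \<le> 1 - rate_a / real r"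
      using shifted_ratio_powr_rate_a_le[OF r] by simp
  qed
  finally show ?thesis unfolding decay_prod_def .
qed

lemma decay_prod_rate_b_le:
  fixes l m :: nat assumes "5 \<le> l" "l \<le> m"
  shows "decay_prod rate_b l m \<le> ((real l - 3/4) / (real m - 3/4)) powr rate_b"
proof -
  obtain d where m: "m = l + d" using assms le_Suc_ex by blast
  have "(\<Prod>r\<in>{l<..m}. 1 - rate_b / real r) \<le> (\<Prod>r\<in>{l<..m}. ((real r + (-7/4)) / (real r + (-7/4) + 1)) powr rate_b)"
  proof (rule prod_mono)
    fix r assume "r \<in> {l<..m}"
    then have r: "6 \<le> real r" using assms by simp
    have "((real r + (-7/4)) / (real r + (-7/4) + 1)) powr rate_b = ((real r - 7/4) / (real r - 3/4)) powr rate_b"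
      by (simp add: algebra_simps)
    moreover have "0 \<le> 1 - rate_b / real r" using r by (intro decay_factor_bounds) simp
    ultimately show "0 \<le> 1 - rate_b / real r \<and> 1 - rate_b / real r \<le> ((real r + (-7/4)) / (real r + (-7/4) + 1)) powr rate_b"
      using le_shifted_ratio_powr_rate_b[OF r] by simp
  qed
  also have "\<dots> = ((real l - 3/4) / (real m - 3/4)) powr rate_b"
    using prod_powr_telescope[of l "-7/4" rate_b d] m assms by simp
  finally show ?thesis unfolding decay_prod_def .
qed

lemma powr_le_tangent:
  fixes t e :: real assumes "0 < t" "0 \<le> e" "e \<le> 1"
  shows "t powr e \<le> 1 + e * (t - 1)"
  using Youngs_inequality_0[of e "1 - e" t 1] assms by (simp add: algebra_simps)

lemma tangent_le_powr:
  fixes t e :: real assumes "0 < t" "1 \<le> e"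
  shows "1 + e * (t - 1) \<le> t powr e"
proof -
  have "(t powr e) powr (1/e) * 1 powr (1 - 1/e) \<le> 1/e * t powr e + (1 - 1/e) * 1"
    using assms by (intro Youngs_inequality_0) (auto simp: field_simps)
  moreover have "(t powr e) powr (1/e) = t" using assms by (simp add: powr_powr)
  ultimately have "t \<le> t powr e / e + (1 - 1/e)" by simp
  then have "e * t \<le> e * (t powr e / e + (1 - 1/e))" using assms by (intro mult_left_mono) auto
  also have "e * (t powr e / e + (1 - 1/e)) = t powr e + (e - 1)" using assms by (simp add: field_simps)
  finally have "e * t \<le> t powr e + (e - 1)" .
  then show ?thesis by (simp add: algebra_simps)
qed

lemma r_star_tangent_increments_le:
  fixes ra rb :: real
  assumes rb: "0 < rb" "rb < ra" "rb \<le> r_star"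
    and ra: "ra < r_star \<Longrightarrow> (r_star / rb) powr sqrt 5 * (r_star - ra) \<le> r_star - rb"
  shows "ra powr rate_a * (rate_a * (r_star / ra - 1)) \<le> rb powr rate_b * (rate_b * (r_star / rb - 1))"
proof (cases "r_star \<le> ra")
  case True
  have "ra powr rate_a * (rate_a * (r_star / ra - 1)) \<le> 0"
    using True rb rate_a_pos by (intro mult_nonneg_nonpos) (auto simp: field_simps)
  moreover have "0 \<le> rb powr rate_b * (rate_b * (r_star / rb - 1))"
    using rb rate_b_pos by (intro mult_nonneg_nonneg) (auto simp: field_simps)
  ultimately show ?thesis by linarith
next
  case False
  then have Rra: "ra < r_star" by simp
  have "(ra / rb) powr rate_a \<le> (ra / rb) powr 1" using rb rate_a_bounds by (intro powr_mono) auto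
  then have slope: "ra powr rate_a / ra \<le> rb powr rate_a / rb" using rb by (simp add: powr_divide field_simps)
  have "ra powr rate_a * (rate_a * (r_star / ra - 1)) = rate_a * (ra powr rate_a / ra) * (r_star - ra)"
    using rb by (simp add: field_simps)
  also have "\<dots> \<le> rate_a * (rb powr rate_a / rb) * (r_star - ra)"
    using slope rate_a_pos Rra by (intro mult_right_mono mult_left_mono) auto
  also have "\<dots> \<le> rate_a * (rb powr rate_a / rb) * ((rb / r_star) powr sqrt 5 * (r_star - rb))"
  proof -
    have "(rb / r_star) powr sqrt 5 * (r_star / rb) powr sqrt 5 = 1"
      using r_star_pos rb by (simp add: powr_mult[symmetric])
    moreover have "(rb / r_star) powr sqrt 5 * ((r_star / rb) powr sqrt 5 * (r_star - ra))
        \<le> (rb / r_star) powr sqrt 5 * (r_star - rb)"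
      using ra[OF Rra] by (intro mult_left_mono) auto
    ultimately have "r_star - ra \<le> (rb / r_star) powr sqrt 5 * (r_star - rb)"
      by (simp add: mult.assoc[symmetric])
    then show ?thesis using rb rate_a_pos by (intro mult_left_mono) auto
  qed
  also have "\<dots> = rb powr rate_b * (rate_b * (r_star / rb - 1))"
  proof -
    have "rb powr sqrt 5 = (rate_a / rate_b) * (rb / r_star) powr sqrt 5"
      using r_star_powr_sqrt5 r_star_pos rb rate_a_pos rate_b_pos by (simp add: powr_divide)
    moreover have "rb powr rate_b = rb powr rate_a * rb powr sqrt 5"
      using rate_b_minus_rate_a by (simp add: powr_add[symmetric] algebra_simps)
    ultimately show ?thesis using rb rate_b_pos by (simp add: field_simps)
  qed
  finally show ?thesis .
qed

text \<open>Since r_star maximises t powr rate_a - t powr rate_b, the claim is a second-order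
  statement; bounding both powers at r_star by their tangent lines at ra and rb reduces it
  to the last hypothesis.\<close>
lemma r_star_gap_le:
  fixes ra rb :: real
  assumes rb: "0 < rb" "rb < ra" "rb \<le> r_star"
    and ra: "ra < r_star \<Longrightarrow> (r_star / rb) powr sqrt 5 * (r_star - ra) \<le> r_star - rb"
  shows "r_star powr rate_a - r_star powr rate_b \<le> ra powr rate_a - rb powr rate_b"
proof -
  have "(r_star / ra) powr rate_a \<le> 1 + rate_a * (r_star / ra - 1)"
    using r_star_pos rb rate_a_bounds by (intro powr_le_tangent) auto
  then have "r_star powr rate_a \<le> ra powr rate_a * (1 + rate_a * (r_star / ra - 1))"
    using r_star_pos rb by (simp add: powr_divide field_simps)
  moreover have "1 + rate_b * (r_star / rb - 1) \<le> (r_star / rb) powr rate_b"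
    using r_star_pos rb rate_b_bounds by (intro tangent_le_powr) auto
  then have "rb powr rate_b * (1 + rate_b * (r_star / rb - 1)) \<le> r_star powr rate_b"
    using r_star_pos rb by (simp add: powr_divide field_simps)
  ultimately show ?thesis
    using r_star_tangent_increments_le[OF rb ra] by (simp add: algebra_simps)
qed

lemma one_plus_powr_sqrt5_le:
  fixes l E :: real
  assumes "5 \<le> l" "0 \<le> E" "E < 1"
  shows "(1 + E / (l - 3/4)) powr sqrt 5 \<le> 9261 / 4913"
proof -
  have q1: "1 \<le> 1 + E / (l - 3/4)" using assms by simp
  have "E / (l - 3/4) \<le> 1 / (5 - 3/4)"
    using assms by (intro frac_le) auto
  have "(1 + E / (l - 3/4)) powr sqrt 5 \<le> (1 + E / (l - 3/4)) powr (3::real)"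
    using q1 sqrt5_bounds by (intro powr_mono) auto
  also have "\<dots> = (1 + E / (l - 3/4)) ^ 3"
    using q1 by (subst powr_numeral) auto
  also have "\<dots> \<le> (21/17) ^ 3"
    using q1 \<open>E / (l - 3/4) \<le> 1 / (5 - 3/4)\<close> by (intro power_mono) auto
  finally show ?thesis by (simp add: power_divide)
qed

lemma r_star_rounding_condition:
  fixes l m E :: real
  assumes l: "5 \<le> l" and m: "l < m" and E: "0 \<le> E" "E < 1"
    and r_star_eq: "r_star = (l - 3/4 + E) / (m - 3/4)"
    and ra: "(l + 1/4) / (m + 1/4) < r_star"
  shows "(r_star / ((l - 3/4) / (m - 3/4))) powr sqrt 5 * (r_star - (l + 1/4) / (m + 1/4))
         \<le> r_star - (l - 3/4) / (m - 3/4)"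
proof -
  define k :: real where "k = 9261 / 4913"
  have pos: "0 < l - 3/4" "0 < m - 3/4" using l m by auto
  have "r_star / ((l - 3/4) / (m - 3/4)) = (l - 3/4 + E) / (l - 3/4)"
    using pos by (simp add: r_star_eq)
  also have "\<dots> = 1 + E / (l - 3/4)"
    using pos by (simp add: add_divide_distrib)
  finally have q: "r_star / ((l - 3/4) / (m - 3/4)) = 1 + E / (l - 3/4)" .
  have pk: "(1 + E / (l - 3/4)) powr sqrt 5 \<le> k"
    unfolding k_def using l E by (rule one_plus_powr_sqrt5_le)
  have R_ra: "r_star - (l + 1/4) / (m + 1/4) = (E + r_star - 1) / (m + 1/4)"
  proof -
    have "r_star * (m - 3/4) = l - 3/4 + E" using pos by (simp add: r_star_eq)
    then have "r_star * (m + 1/4) - (l + 1/4) = E + r_star - 1" by (simp add: algebra_simps)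
    moreover have "r_star - (l + 1/4) / (m + 1/4) = (r_star * (m + 1/4) - (l + 1/4)) / (m + 1/4)"
      using pos by (simp add: field_simps)
    ultimately show ?thesis by simp
  qed
  moreover have "0 < r_star - (l + 1/4) / (m + 1/4)" using ra by simp
  ultimately have "0 < (E + r_star - 1) / (m + 1/4)" by simp
  then have E_pos: "0 < E + r_star - 1"
    using pos by (simp add: zero_less_divide_iff)
  have "(1 + E / (l - 3/4)) powr sqrt 5 * (r_star - (l + 1/4) / (m + 1/4))
      \<le> k * (r_star - (l + 1/4) / (m + 1/4))"
    using pk ra by (intro mult_right_mono) auto
  also have "\<dots> = k * (E + r_star - 1) / (m + 1/4)" unfolding R_ra by simp
  also have "\<dots> \<le> k * (E + r_star - 1) / (m - 3/4)"
    using E_pos l m by (intro divide_left_mono) (auto simp: k_def)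
  also have "\<dots> \<le> E / (m - 3/4)"
  proof (rule divide_right_mono)
    have "(k - 1) * E \<le> (k - 1) * 1" using E by (intro mult_left_mono) (auto simp: k_def)
    moreover have "(k - 1) * 1 \<le> k * (1 - r_star)" using r_star_upper by (simp add: k_def)
    ultimately show "k * (E + r_star - 1) \<le> E" by (simp add: algebra_simps)
  qed (use l m in simp)
  also have "\<dots> = r_star - (l - 3/4) / (m - 3/4)"
    by (simp add: r_star_eq diff_divide_distrib[symmetric])
  finally show ?thesis unfolding q .
qed

section \<open>Choosing the stopping time\<close>

text \<open>The stopping index is the rounding of r_star m, with the shifts that the product
  estimates require.\<close>
lemma good_stop_large:
  fixes m :: nat
  assumes m: "12 \<le> m"
  shows "\<exists>l. 2 \<le> l \<and> l < m \<and>
     sqrt 5 * greedy_ratio \<le> decay_prod rate_a l m - decay_prod rate_b l m"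
proof -
  define z where "z = r_star * (real m - 3/4) + 3/4"
  define l where "l = nat \<lfloor>z\<rfloor>"
  define E where "E = z - real l"
  have "0.4 * (real m - 3/4) \<le> r_star * (real m - 3/4)"
    using r_star_lower m by (intro mult_right_mono) auto
  moreover have "r_star * (real m - 3/4) \<le> 0.44 * (real m - 3/4)"
    using r_star_upper m by (intro mult_right_mono) auto
  ultimately have "5 \<le> z" "z < real m" using m by (auto simp: z_def)
  moreover have "real l = real_of_int \<lfloor>z\<rfloor>"
    using \<open>5 \<le> z\<close> by (simp add: l_def)
  then have floor: "real l \<le> z" "z < real l + 1" by linarith+
  ultimately have "5 \<le> l" "l < m" by linarith+
  then have l: "5 \<le> real l" "real l < real m" by simp_all
  have E: "0 \<le> E" "E < 1" using floor unfolding E_def by linarith+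
  define ra where "ra = (real l + 1/4) / (real m + 1/4)"
  define rb where "rb = (real l - 3/4) / (real m - 3/4)"
  have r_star_eq: "r_star = (real l - 3/4 + E) / (real m - 3/4)"
    using m by (simp add: E_def z_def field_simps)
  have "rb < ra"
    using l by (simp add: ra_def rb_def field_simps)
  moreover have "0 < rb" "rb \<le> r_star"
    using l E by (auto simp: rb_def r_star_eq intro: divide_right_mono)
  ultimately have "r_star powr rate_a - r_star powr rate_b \<le> ra powr rate_a - rb powr rate_b"
    using r_star_rounding_condition[OF l E r_star_eq] by (intro r_star_gap_le) (auto simp: ra_def rb_def)
  also have "\<dots> \<le> decay_prod rate_a l m - decay_prod rate_b l m"
    using decay_prod_rate_a_ge[of l m] decay_prod_rate_b_le[of l m] l
    unfolding ra_def rb_def by simp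
  finally show ?thesis
    using l by (intro exI[of _ l]) (simp add: greedy_ratio_eq)
qed

lemma good_stop_small:
  fixes m :: nat
  assumes "4 \<le> m" "m \<le> 11"
  shows "\<exists>l. 2 \<le> l \<and> l < m \<and>
     sqrt 5 * greedy_ratio \<le> decay_prod rate_a l m - decay_prod rate_b l m"
proof -
  have "sqrt 5 * greedy_ratio \<le> 2.2361 * 0.29"
    using sqrt5_bounds(2) greedy_ratio_le greedy_ratio_nonneg by (intro mult_mono) auto
  also have "\<dots> \<le> decay_prod 0.382 (m div 2) m - decay_prod 2.618 (m div 2) m"
  proof -
    have "m = 4 \<or> m = 5 \<or> m = 6 \<or> m = 7 \<or> m = 8 \<or> m = 9 \<or> m = 10 \<or> m = 11"
      using assms by auto
    then show ?thesis
      by (elim disjE) (simp_all add: decay_prod_def greaterThanAtMost_upt upt_rec)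
  qed
  also have "\<dots> \<le> decay_prod rate_a (m div 2) m - decay_prod rate_b (m div 2) m"
    using assms by (intro decay_prod_bounds(3)) auto
  finally show ?thesis
    using assms by (intro exI[of _ "m div 2"]) auto
qed

lemma good_stop:
  fixes m :: nat
  assumes "4 \<le> m"
  obtains l where "2 \<le> l" "l < m"
    "sqrt 5 * greedy_ratio \<le> decay_prod rate_a l m - decay_prod rate_b l m"
  using good_stop_small[of m] good_stop_large[of m] assms by (cases "m \<le> 11") auto

lemma ratio_bound_few_items:
  fixes w v :: "nat \<Rightarrow> real" and m :: nat and Q :: real
  assumes m: "1 \<le> m" "m \<le> 3"
    and w_step: "w 0 + (v 0 - 2 * w 0) / real m \<le> w 1"
    and w_mono: "\<And>k. k < m \<Longrightarrow> w k \<le> w (Suc k)"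
    and w0: "0 \<le> w 0" and v0: "v 0 = w 0 + Q" and Q: "0 \<le> Q"
  shows "greedy_ratio * Q \<le> w m"
proof -
  have "greedy_ratio \<le> 1 / real m"
    using greedy_ratio_le m order.trans[of _ "1/3" "1 / real m"] by (simp add: field_simps)
  then have "greedy_ratio * Q \<le> Q / real m"
    using mult_right_mono[OF _ Q] by fastforce
  also have "\<dots> \<le> (1 - 1 / real m) * w 0 + Q / real m"
    using w0 m by (simp add: mult_nonneg_nonneg)
  also have "\<dots> = w 0 + (v 0 - 2 * w 0) / real m"
    using v0 m by (simp add: field_simps)
  also have "\<dots> \<le> w m"
    using w_step lift_Suc_mono_le_ivl[of "{..<m}" w 1 m] w_mono m by (simp add: subset_eq)
  finally show ?thesis .
qed

lemma ratio_bound_from_recurrence: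
  fixes w v :: "nat \<Rightarrow> real" and m :: nat and Q :: real
  assumes w_step: "\<And>k. k < m \<Longrightarrow> w k + (v k - 2 * w k) / real (m - k) \<le> w (Suc k)"
    and v_step: "\<And>k. k < m \<Longrightarrow> v k + (w k - v k) / real (m - k) \<le> v (Suc k)"
    and w_mono: "\<And>k. k < m \<Longrightarrow> w k \<le> w (Suc k)"
    and w0: "0 \<le> w 0" and v0: "v 0 = w 0 + Q" and Q: "0 \<le> Q"
    and m0: "m = 0 \<Longrightarrow> Q \<le> w 0"
  shows "greedy_ratio * Q \<le> w m"
proof -
  consider "m = 0" | "1 \<le> m" "m \<le> 3" | "4 \<le> m" by linarith
  then show ?thesis
  proof cases
    case 1
    have "greedy_ratio * Q \<le> 1 * Q" using greedy_ratio_le Q by (intro mult_right_mono) auto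
    then show ?thesis using m0 1 by simp
  next
    case 2
    have "w 0 + (v 0 - 2 * w 0) / real m \<le> w 1" using w_step[of 0] 2 by simp
    then show ?thesis by (rule ratio_bound_few_items[of m w v, OF 2 _ w_mono w0 v0 Q])
  next
    case 3
    obtain l where l: "2 \<le> l" "l < m"
      and gap: "sqrt 5 * greedy_ratio \<le> decay_prod rate_a l m - decay_prod rate_b l m"
      using good_stop[OF 3] .
    have "sqrt 5 * greedy_ratio * Q \<le> (decay_prod rate_a l m - decay_prod rate_b l m) * Q"
      using gap Q by (rule mult_right_mono)
    also have "\<dots> \<le> sqrt 5 * w m"
      using l by (intro recurrence_stopped_bound[OF _ _ w_step v_step w_mono w0 v0 Q]) auto
    finally show ?thesis by simp
  qed
qed
context greedy_instance
begin

lemma greedy_ratio_bound: "greedy_ratio * welfare n f Opt \<le> expected_greedy N n f ch"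
proof -
  have "greedy_ratio * welfare n f Opt \<le> avg_greedy (card N)"
    by (rule ratio_bound_from_recurrence[OF avg_greedy_step avg_total_step avg_greedy_mono])
       (simp_all add: avg_greedy_0 avg_total_0 greedy_value_Nil_nonneg welfare_Opt_nonneg
         welfare_Opt_if_no_items)
  then show ?thesis by (simp add: avg_greedy_card)
qed

end

theorem theorem3:
  fixes N :: "'a set" and n :: nat and f :: "nat \<Rightarrow> 'a set \<Rightarrow> real"
    and ch :: "'a list \<Rightarrow> (nat \<Rightarrow> 'a set) \<Rightarrow> 'a \<Rightarrow> nat option"
    and Opt :: "nat \<Rightarrow> 'a set"
  assumes "finite N"
    and "\<forall>j<n. submodular_on N (f j)"
    and "\<forall>j<n. \<forall>A\<subseteq>N. 0 \<le> f j A"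
    and "greedy_rule n f ch"
    and "\<forall>j<n. Opt j \<subseteq> N"
    and "\<forall>j<n. \<forall>k<n. j \<noteq> k \<longrightarrow> Opt j \<inter> Opt k = {}"
  shows "expected_greedy N n f ch \<ge> greedy_ratio * welfare n f Opt"
proof -
  interpret greedy_instance N n f ch Opt
    using assms by unfold_locales
  show ?thesis using greedy_ratio_bound by simp
qed

end
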